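(* For every $n\ge5$, the quasisymmetric functions $F(T)$, where $T$ ranges over the (pairwise non-isomorphic) unlabelled rooted trees on $n$ vertices, are linearly dependent.
   Context: For a rooted tree $T$, a $T$-partition is a function $f$ from the vertices to $\mathbb{N}=\{1,2,\dots\}$ with $f(u)<f(w)$ whenever $w$ is the parent of $u$, and $F(T)=\sum_f\prod_u x_{f(u)}$ over all $T$-partitions, a quasisymmetric formal power series in $x_1,x_2,\dots$ depending only on the isomorphism class of $T$. *)

theory Defs
  imports Complex_Main "HOL-Library.FuncSet"
begin

text \<open>A rooted tree on n vertices is encoded on the vertex set {0..<n}, with root 0,
  by a parent function p with p i < i for every non-root vertex i.  Every finite rooted
  tree admits such a labelling (e.g. breadth-first order).  Values of p outside the
  non-root vertices are normalised to 0 so that the encoding is unique.\<close>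

definition rtrees :: "nat \<Rightarrow> (nat \<Rightarrow> nat) set" where
  "rtrees n = {p. 1 \<le> n \<and> (\<forall>i. 0 < i \<and> i < n \<longrightarrow> p i < i)
                 \<and> (\<forall>i. (i = 0 \<or> n \<le> i) \<longrightarrow> p i = 0)}"

definition tree_iso :: "nat \<Rightarrow> (nat \<Rightarrow> nat) \<Rightarrow> (nat \<Rightarrow> nat) \<Rightarrow> bool" where
  "tree_iso n p q \<longleftrightarrow> (\<exists>\<sigma>. bij_betw \<sigma> {0..<n} {0..<n} \<and> \<sigma> 0 = 0 \<and>
      (\<forall>i. 0 < i \<and> i < n \<longrightarrow> q (\<sigma> i) = \<sigma> (p i)))"

definition iso_rel :: "nat \<Rightarrow> ((nat \<Rightarrow> nat) \<times> (nat \<Rightarrow> nat)) set" where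
  "iso_rel n = {(p, q). p \<in> rtrees n \<and> q \<in> rtrees n \<and> tree_iso n p q}"

definition tree_classes :: "nat \<Rightarrow> (nat \<Rightarrow> nat) set set" where
  "tree_classes n = rtrees n // iso_rel n"

definition tpartition :: "nat \<Rightarrow> (nat \<Rightarrow> nat) \<Rightarrow> (nat \<Rightarrow> nat) \<Rightarrow> bool" where
  "tpartition n p f \<longleftrightarrow> (\<forall>u<n. 1 \<le> f u) \<and> (\<forall>u. 0 < u \<and> u < n \<longrightarrow> f u < f (p u))"

text \<open>Coefficient of the monomial x^alpha = prod_k x_k^(alpha k) in F(T):
  the number of T-partitions f with prod_u x_(f u) = x^alpha.\<close>

definition Fcoeff :: "nat \<Rightarrow> (nat \<Rightarrow> nat) \<Rightarrow> (nat \<Rightarrow> nat) \<Rightarrow> nat" where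
  "Fcoeff n p \<alpha> = card {f \<in> {0..<n} \<rightarrow>\<^sub>E UNIV. tpartition n p f \<and>
                         (\<forall>k. card {u \<in> {0..<n}. f u = k} = \<alpha> k)}"

text \<open>F of an isomorphism class (F depends only on the class; we pick a representative).\<close>

definition Fclass :: "nat \<Rightarrow> (nat \<Rightarrow> nat) set \<Rightarrow> (nat \<Rightarrow> nat) \<Rightarrow> nat" where
  "Fclass n C = Fcoeff n (SOME p. p \<in> C)"

end

theory Submission
  imports Defs
begin

text \<open>
  Quasisymmetry: the coefficient of x^\<alpha> in F(T) does not change when an unused
  value is squeezed out of \<alpha>, and the root is the unique vertex carrying the largest
  value.  Hence, up to this squeezing, only the "packed" contents matter: the
  compositions of n whose last part is 1.  When there are fewer packed contents than
  isomorphism classes, an underdetermined homogeneous linear system yields a nontrivial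
  rational relation.  For n = 5 there are 8 packed contents but 9 classes of trees.

  Induction: putting a new root above the root of T turns the coefficient of x^\<alpha> in
  F(T) into that of x^\<alpha>' with the top part of \<alpha> removed; this operation is injective
  on isomorphism classes, so every relation among trees on n vertices lifts to n + 1.
\<close>

lemma homogeneous_system_nontrivial:
  fixes a :: "'e \<Rightarrow> 'i \<Rightarrow> rat"
  assumes "finite E" "finite I" "card E < card I"
  shows "\<exists>c. (\<exists>i\<in>I. c i \<noteq> 0) \<and> (\<forall>e\<in>E. (\<Sum>i\<in>I. c i * a e i) = 0)"
  using assms
proof (induction E arbitrary: I a rule: finite_induct)
  case empty
  then obtain i where "i \<in> I" by fastforce
  then show ?case by (intro exI[of _ "\<lambda>_. 1"]) auto
next
  case (insert e E)
  show ?case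
  proof (cases "\<forall>i\<in>I. a e i = 0")
    case True
    obtain c where "\<exists>i\<in>I. c i \<noteq> 0" "\<forall>e'\<in>E. (\<Sum>i\<in>I. c i * a e' i) = 0"
      using insert.IH[of I a] insert.prems insert.hyps by auto
    then show ?thesis using True by (intro exI[of _ c]) auto
  next
    case False
    text \<open>Pivot on a nonzero entry of row e and eliminate the unknown i0.\<close>
    then obtain i0 where i0: "i0 \<in> I" "a e i0 \<noteq> 0" by auto
    define I' where "I' = I - {i0}"
    define a' where "a' = (\<lambda>e' j. a e' j - a e' i0 * a e j / a e i0)"
    have "card E < card I'" "finite I'" using insert i0 by (auto simp: I'_def)
    then obtain c' where c': "\<exists>i\<in>I'. c' i \<noteq> 0" "\<forall>e'\<in>E. (\<Sum>i\<in>I'. c' i * a' e' i) = 0"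
      using insert.IH[of I' a'] by auto
    define S where "S = (\<Sum>j\<in>I'. c' j * a e j)"
    define c where "c = (\<lambda>j. if j = i0 then - S / a e i0 else c' j)"
    have split: "\<And>g. (\<Sum>i\<in>I. g i) = g i0 + (\<Sum>i\<in>I'. g i)"
      using i0 insert.prems by (simp add: I'_def sum.remove)
    have on_I': "\<And>g. (\<Sum>i\<in>I'. c i * g i) = (\<Sum>i\<in>I'. c' i * g i)"
      by (rule sum.cong) (auto simp: c_def I'_def)
    show ?thesis
    proof (intro exI[of _ c] conjI ballI)
      from c'(1) obtain j where "j \<in> I'" "c' j \<noteq> 0" by auto
      then show "\<exists>i\<in>I. c i \<noteq> 0" by (intro bexI[of _ j]) (auto simp: c_def I'_def)
    next
      fix e' assume "e' \<in> insert e E"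
      then show "(\<Sum>i\<in>I. c i * a e' i) = 0"
      proof
        assume "e' = e"
        then show ?thesis using i0 by (simp add: split on_I' S_def[symmetric]) (simp add: c_def)
      next
        assume "e' \<in> E"
        then have "(\<Sum>j\<in>I'. c' j * a' e' j) = 0" using c' by auto
        moreover have "(\<Sum>j\<in>I'. c' j * a' e' j) = (\<Sum>j\<in>I'. c' j * a e' j) - a e' i0 / a e i0 * S"
          by (simp add: a'_def S_def right_diff_distrib sum_subtractf sum_distrib_left mult_ac)
        moreover have "(\<Sum>i\<in>I. c i * a e' i) = c i0 * a e' i0 + (\<Sum>i\<in>I'. c' i * a e' i)"
          by (simp add: split on_I')
        ultimately show ?thesis using i0 by (simp add: c_def)
      qed
    qed
  qed
qed

lemma card_filter_bij:
  assumes bij: "bij_betw \<sigma> A B" and PQ: "\<And>i. i \<in> A \<Longrightarrow> P i \<longleftrightarrow> Q (\<sigma> i)"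
  shows "card {i \<in> A. P i} = card {j \<in> B. Q j}"
proof -
  have "bij_betw \<sigma> {i \<in> A. P i} {j \<in> B. Q j}"
  proof (rule bij_betw_subset[OF bij])
    show "\<sigma> ` {i \<in> A. P i} = {j \<in> B. Q j}"
      using bij PQ by (auto simp: bij_betw_def image_iff)
  qed auto
  then show ?thesis by (rule bij_betw_same_card)
qed

definition classes_dependent :: "nat \<Rightarrow> bool" where
  "classes_dependent n \<longleftrightarrow> (\<exists>c :: (nat \<Rightarrow> nat) set \<Rightarrow> rat.
      (\<exists>C \<in> tree_classes n. c C \<noteq> 0) \<and>
      (\<forall>\<alpha>. (\<Sum>C \<in> tree_classes n. c C * of_nat (Fclass n C \<alpha>)) = 0))"

text \<open>In the encoding every parent precedes its child, so parents of vertices are vertices.\<close>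

lemma rtreesD:
  assumes "p \<in> rtrees n"
  shows "1 \<le> n" "\<And>i. 0 < i \<Longrightarrow> i < n \<Longrightarrow> p i < i" "p 0 = 0" "\<And>i. i < n \<Longrightarrow> p i < n"
proof -
  show "1 \<le> n" "\<And>i. 0 < i \<Longrightarrow> i < n \<Longrightarrow> p i < i" "p 0 = 0"
    using assms by (auto simp: rtrees_def)
  then show "\<And>i. i < n \<Longrightarrow> p i < n" by (metis gr0I less_trans)
qed

definition tparts :: "nat \<Rightarrow> (nat \<Rightarrow> nat) \<Rightarrow> (nat \<Rightarrow> nat) \<Rightarrow> (nat \<Rightarrow> nat) set" where
  "tparts n p \<alpha> = {f \<in> {0..<n} \<rightarrow>\<^sub>E UNIV. tpartition n p f \<and>
                     (\<forall>k. card {u \<in> {0..<n}. f u = k} = \<alpha> k)}"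

lemma Fcoeff_card: "Fcoeff n p \<alpha> = card (tparts n p \<alpha>)"
  by (simp add: Fcoeff_def tparts_def)

text \<open>Values strictly increase along the path to the root, so the root carries the
  largest value, and it carries it alone.\<close>

lemma below_root:
  assumes p: "p \<in> rtrees n" and f: "tpartition n p f" and "0 < u" "u < n"
  shows "f u < f 0"
  using assms(3,4)
proof (induction u rule: less_induct)
  case (less u)
  have "p u < u" using rtreesD(2)[OF p] less.prems by auto
  moreover have "f u < f (p u)" using f less.prems by (auto simp: tpartition_def)
  ultimately show ?case using less.IH[of "p u"] less.prems by (cases "p u = 0") auto
qed

lemma root_content:
  assumes p: "p \<in> rtrees n" and f: "f \<in> tparts n p \<alpha>"
  shows "\<alpha> (f 0) = 1" "\<And>k. f 0 < k \<Longrightarrow> \<alpha> k = 0"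
proof -
  have tp: "tpartition n p f" and count: "\<And>k. card {u \<in> {0..<n}. f u = k} = \<alpha> k"
    using f by (auto simp: tparts_def)
  have "1 \<le> n" using rtreesD(1)[OF p] .
  then have "{u \<in> {0..<n}. f u = f 0} = {0}"
    using below_root[OF p tp] by (auto, metis less_irrefl neq0_conv)
  then show "\<alpha> (f 0) = 1" using count[of "f 0"] by simp
  fix k assume "f 0 < k"
  have "f u \<le> f 0" if "u < n" for u
    using below_root[OF p tp, of u] that by (cases "u = 0") auto
  then have none: "{u \<in> {0..<n}. f u = k} = {}" using \<open>f 0 < k\<close> by fastforce
  show "\<alpha> k = 0" using count[of k] unfolding none by simp
qed

lemma content_zero:
  assumes "f \<in> tparts n p \<alpha>"
  shows "\<alpha> 0 = 0"
proof -
  have none: "{u \<in> {0..<n}. f u = 0} = {}"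
    using assms by (fastforce simp: tparts_def tpartition_def)
  have "card {u \<in> {0..<n}. f u = 0} = \<alpha> 0" using assms by (simp add: tparts_def)
  then show ?thesis unfolding none by simp
qed

lemma content_pos:
  assumes "f \<in> tparts n p \<alpha>" "u < n"
  shows "\<alpha> (f u) \<noteq> 0"
proof -
  have "u \<in> {v \<in> {0..<n}. f v = f u}" using assms(2) by simp
  then have nonempty: "card {v \<in> {0..<n}. f v = f u} \<noteq> 0" by (subst card_0_eq) auto
  have "card {v \<in> {0..<n}. f v = f u} = \<alpha> (f u)" using assms(1) by (simp add: tparts_def)
  then show ?thesis using nonempty by argo
qed

definition iso_wit :: "nat \<Rightarrow> (nat \<Rightarrow> nat) \<Rightarrow> (nat \<Rightarrow> nat) \<Rightarrow> (nat \<Rightarrow> nat) \<Rightarrow> bool" where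
  "iso_wit n p q \<sigma> \<longleftrightarrow> bij_betw \<sigma> {0..<n} {0..<n} \<and> \<sigma> 0 = 0 \<and>
      (\<forall>i. 0 < i \<and> i < n \<longrightarrow> q (\<sigma> i) = \<sigma> (p i))"

lemma tree_iso_wit: "tree_iso n p q \<longleftrightarrow> (\<exists>\<sigma>. iso_wit n p q \<sigma>)"
  by (simp add: tree_iso_def iso_wit_def)

lemma iso_witD:
  assumes "iso_wit n p q \<sigma>"
  shows "bij_betw \<sigma> {0..<n} {0..<n}" "\<sigma> 0 = 0"
    "\<And>i. 0 < i \<Longrightarrow> i < n \<Longrightarrow> q (\<sigma> i) = \<sigma> (p i)"
  using assms by (auto simp: iso_wit_def)

lemma iso_wit_nonroot:
  assumes "iso_wit n p q \<sigma>" "0 < i" "i < n"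
  shows "0 < \<sigma> i" "\<sigma> i < n"
proof -
  have b: "bij_betw \<sigma> {0..<n} {0..<n}" and s0: "\<sigma> 0 = 0" using iso_witD[OF assms(1)] by auto
  then show "\<sigma> i < n" using assms by (auto dest: bij_betwE)
  have "inj_on \<sigma> {0..<n}" using b by (simp add: bij_betw_def)
  then have "\<sigma> i \<noteq> \<sigma> 0" using assms by (auto dest: inj_onD)
  then show "0 < \<sigma> i" using s0 by simp
qed

lemma iso_wit_inv:
  assumes p: "p \<in> rtrees n" and s: "iso_wit n p q \<sigma>"
  shows "iso_wit n q p (inv_into {0..<n} \<sigma>)"
proof -
  let ?\<tau> = "inv_into {0..<n} \<sigma>"
  have b: "bij_betw \<sigma> {0..<n} {0..<n}" and s0: "\<sigma> 0 = 0"
    and comm: "\<And>i. 0 < i \<Longrightarrow> i < n \<Longrightarrow> q (\<sigma> i) = \<sigma> (p i)" using iso_witD[OF s] by auto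
  have inj: "inj_on \<sigma> {0..<n}" using b by (simp add: bij_betw_def)
  have bt: "bij_betw ?\<tau> {0..<n} {0..<n}" using bij_betw_inv_into[OF b] .
  have \<tau>0: "?\<tau> 0 = 0" using inv_into_f_f[OF inj, of 0] rtreesD(1)[OF p] s0 by simp
  have \<sigma>\<tau>: "\<sigma> (?\<tau> v) = v" if "v < n" for v
    using b that by (simp add: bij_betw_def f_inv_into_f)
  have \<tau>\<sigma>: "?\<tau> (\<sigma> x) = x" if "x < n" for x using inv_into_f_f[OF inj] that by simp
  have "p (?\<tau> v) = ?\<tau> (q v)" if v: "0 < v" "v < n" for v
  proof -
    have below: "?\<tau> v < n" using bij_betwE[OF bt] v by auto
    have "?\<tau> v \<noteq> 0" using \<sigma>\<tau>[OF v(2)] s0 v(1) by (metis less_irrefl)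
    then have "q v = \<sigma> (p (?\<tau> v))" using comm[of "?\<tau> v"] below \<sigma>\<tau>[OF v(2)] by simp
    then show ?thesis using \<tau>\<sigma> rtreesD(4)[OF p] below by simp
  qed
  then show ?thesis using bt \<tau>0 by (auto simp: iso_wit_def)
qed

lemma iso_wit_tparts:
  assumes p: "p \<in> rtrees n" and s: "iso_wit n p q \<sigma>" and g: "g \<in> tparts n q \<alpha>"
  shows "restrict (g \<circ> \<sigma>) {0..<n} \<in> tparts n p \<alpha>"
proof -
  have b: "bij_betw \<sigma> {0..<n} {0..<n}"
    and comm: "\<And>i. 0 < i \<Longrightarrow> i < n \<Longrightarrow> q (\<sigma> i) = \<sigma> (p i)" using iso_witD[OF s] by auto
  have tp: "tpartition n q g" and count: "\<And>k. card {u \<in> {0..<n}. g u = k} = \<alpha> k"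
    using g by (auto simp: tparts_def)
  have \<sigma>n: "\<And>u. u < n \<Longrightarrow> \<sigma> u < n" using bij_betwE[OF b] by auto
  have "tpartition n p (restrict (g \<circ> \<sigma>) {0..<n})"
    unfolding tpartition_def
  proof (intro conjI allI impI)
    fix u assume "u < n"
    then show "1 \<le> restrict (g \<circ> \<sigma>) {0..<n} u" using tp \<sigma>n[of u] by (auto simp: tpartition_def)
  next
    fix u assume u: "0 < u \<and> u < n"
    have "g (\<sigma> u) < g (q (\<sigma> u))" using tp iso_wit_nonroot[OF s, of u] u
      by (auto simp: tpartition_def)
    then show "restrict (g \<circ> \<sigma>) {0..<n} u < restrict (g \<circ> \<sigma>) {0..<n} (p u)"
      using comm[of u] u rtreesD(4)[OF p, of u] by auto
  qed
  moreover have "card {u \<in> {0..<n}. restrict (g \<circ> \<sigma>) {0..<n} u = k} = \<alpha> k" for k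
    using card_filter_bij[OF b, of "\<lambda>u. restrict (g \<circ> \<sigma>) {0..<n} u = k" "\<lambda>v. g v = k"] count[of k]
    by simp
  ultimately show ?thesis by (auto simp: tparts_def)
qed

lemma Fcoeff_iso:
  assumes p: "p \<in> rtrees n" and q: "q \<in> rtrees n" and iso: "tree_iso n p q"
  shows "Fcoeff n p \<alpha> = Fcoeff n q \<alpha>"
proof -
  obtain \<sigma> where s: "iso_wit n p q \<sigma>" using iso tree_iso_wit by blast
  let ?\<tau> = "inv_into {0..<n} \<sigma>"
  have t: "iso_wit n q p ?\<tau>" using iso_wit_inv[OF p s] .
  have b: "bij_betw \<sigma> {0..<n} {0..<n}" using iso_witD[OF s] by simp
  have \<sigma>\<tau>: "\<sigma> (?\<tau> v) = v" and \<tau>\<sigma>: "?\<tau> (\<sigma> v) = v" if "v < n" for v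
    using b that by (simp_all add: bij_betw_def f_inv_into_f inv_into_f_f)
  have \<sigma>n: "\<And>u. u < n \<Longrightarrow> \<sigma> u < n" and \<tau>n: "\<And>u. u < n \<Longrightarrow> ?\<tau> u < n"
    using bij_betwE[OF b] bij_betwE[OF bij_betw_inv_into[OF b]] by auto
  have "bij_betw (\<lambda>g. restrict (g \<circ> \<sigma>) {0..<n}) (tparts n q \<alpha>) (tparts n p \<alpha>)"
  proof (rule bij_betw_byWitness[where f' = "\<lambda>f. restrict (f \<circ> ?\<tau>) {0..<n}"])
    show "\<forall>g\<in>tparts n q \<alpha>. restrict (restrict (g \<circ> \<sigma>) {0..<n} \<circ> ?\<tau>) {0..<n} = g"
    proof
      fix g assume "g \<in> tparts n q \<alpha>"
      then have "g \<in> {0..<n} \<rightarrow>\<^sub>E UNIV" by (simp add: tparts_def)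
      then show "restrict (restrict (g \<circ> \<sigma>) {0..<n} \<circ> ?\<tau>) {0..<n} = g"
        by (auto simp: fun_eq_iff \<sigma>\<tau> \<tau>n PiE_def extensional_def)
    qed
    show "\<forall>f\<in>tparts n p \<alpha>. restrict (restrict (f \<circ> ?\<tau>) {0..<n} \<circ> \<sigma>) {0..<n} = f"
    proof
      fix f assume "f \<in> tparts n p \<alpha>"
      then have "f \<in> {0..<n} \<rightarrow>\<^sub>E UNIV" by (simp add: tparts_def)
      then show "restrict (restrict (f \<circ> ?\<tau>) {0..<n} \<circ> \<sigma>) {0..<n} = f"
        by (auto simp: fun_eq_iff \<tau>\<sigma> \<sigma>n PiE_def extensional_def)
    qed
    show "(\<lambda>g. restrict (g \<circ> \<sigma>) {0..<n}) ` tparts n q \<alpha> \<subseteq> tparts n p \<alpha>"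
      using iso_wit_tparts[OF p s] by auto
    show "(\<lambda>f. restrict (f \<circ> ?\<tau>) {0..<n}) ` tparts n p \<alpha> \<subseteq> tparts n q \<alpha>"
      using iso_wit_tparts[OF q t] by auto
  qed
  then show ?thesis by (simp add: Fcoeff_card bij_betw_same_card)
qed

lemma iso_equiv: "equiv (rtrees n) (iso_rel n)"
proof (rule equivI)
  show "iso_rel n \<subseteq> rtrees n \<times> rtrees n" by (auto simp: iso_rel_def)
  show "refl_on (rtrees n) (iso_rel n)"
    by (rule refl_onI) (auto simp: iso_rel_def tree_iso_def intro!: exI[of _ id])
  show "sym (iso_rel n)"
    by (rule symI) (auto simp: iso_rel_def tree_iso_wit dest: iso_wit_inv)
  show "trans (iso_rel n)"
  proof (rule transI)
    fix p q r assume pq: "(p, q) \<in> iso_rel n" and qr: "(q, r) \<in> iso_rel n"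
    then obtain s1 s2 where s1: "iso_wit n p q s1" and s2: "iso_wit n q r s2"
      by (auto simp: iso_rel_def tree_iso_wit)
    have "r (s2 (s1 i)) = s2 (s1 (p i))" if "0 < i" "i < n" for i
      using iso_witD(3)[OF s2] iso_witD(3)[OF s1] iso_wit_nonroot[OF s1] that by simp
    then have "iso_wit n p r (s2 \<circ> s1)"
      using iso_witD(1,2)[OF s1] iso_witD(1,2)[OF s2]
      by (auto simp: iso_wit_def intro: bij_betw_trans)
    then show "(p, r) \<in> iso_rel n" using pq qr by (auto simp: iso_rel_def tree_iso_wit)
  qed
qed

lemma finite_rtrees: "finite (rtrees n)"
proof -
  have "rtrees n \<subseteq> (\<lambda>f i. if i < n then f i else 0) ` ({0..<n} \<rightarrow>\<^sub>E {0..<n})"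
  proof
    fix p assume p: "p \<in> rtrees n"
    have "p = (\<lambda>i. if i < n then restrict p {0..<n} i else 0)"
      using p by (auto simp: fun_eq_iff rtrees_def)
    moreover have "restrict p {0..<n} \<in> {0..<n} \<rightarrow>\<^sub>E {0..<n}"
      using rtreesD(4)[OF p] by auto
    ultimately show "p \<in> (\<lambda>f i. if i < n then f i else 0) ` ({0..<n} \<rightarrow>\<^sub>E {0..<n})" by blast
  qed
  then show ?thesis by (rule finite_subset) (auto intro: finite_PiE)
qed

lemma finite_classes: "finite (tree_classes n)"
  unfolding tree_classes_def
  by (rule finite_quotient[OF finite_rtrees]) (auto simp: iso_rel_def)

lemma class_of_tree:
  assumes "p \<in> rtrees n"
  shows "iso_rel n `` {p} \<in> tree_classes n" "p \<in> iso_rel n `` {p}"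
  using assms equiv_class_self[OF iso_equiv assms]
  by (auto simp: tree_classes_def intro: quotientI)

lemma class_subset: "C \<in> tree_classes n \<Longrightarrow> C \<subseteq> rtrees n"
  using in_quotient_imp_subset[OF iso_equiv] by (simp add: tree_classes_def)

lemma class_rep: "C \<in> tree_classes n \<Longrightarrow> (SOME p. p \<in> C) \<in> C"
  using in_quotient_imp_non_empty[OF iso_equiv] by (simp add: tree_classes_def some_in_eq)

lemma Fclass_eq:
  assumes C: "C \<in> tree_classes n" and p: "p \<in> C"
  shows "Fclass n C \<alpha> = Fcoeff n p \<alpha>"
proof -
  have "(SOME q. q \<in> C) \<in> C" using class_rep[OF C] .
  then have "((SOME q. q \<in> C), p) \<in> iso_rel n"
    using in_quotient_imp_in_rel[OF iso_equiv C[unfolded tree_classes_def]] p by simp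
  then show ?thesis using Fcoeff_iso by (auto simp: Fclass_def iso_rel_def)
qed

definition skip :: "nat \<Rightarrow> nat \<Rightarrow> nat" where "skip k j = (if j < k then j else Suc j)"
definition unskip :: "nat \<Rightarrow> nat \<Rightarrow> nat" where "unskip k i = (if i < k then i else i - 1)"

lemma skip_facts:
  shows "unskip k (skip k j) = j" "i \<noteq> k \<Longrightarrow> skip k (unskip k i) = i" "skip k j \<noteq> k"
    "a < b \<Longrightarrow> skip k a < skip k b" "i \<noteq> k \<Longrightarrow> i' \<noteq> k \<Longrightarrow> i < i' \<Longrightarrow> unskip k i < unskip k i'"
    "j \<le> skip k j" "0 < k \<Longrightarrow> 0 < i \<Longrightarrow> i \<noteq> k \<Longrightarrow> 0 < unskip k i"
  by (auto simp: skip_def unskip_def)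

definition skip_values :: "nat \<Rightarrow> nat \<Rightarrow> (nat \<Rightarrow> nat) \<Rightarrow> nat \<Rightarrow> nat" where
  "skip_values n k f = restrict (\<lambda>u. skip k (f u)) {0..<n}"

definition unskip_values :: "nat \<Rightarrow> nat \<Rightarrow> (nat \<Rightarrow> nat) \<Rightarrow> nat \<Rightarrow> nat" where
  "unskip_values n k g = restrict (\<lambda>u. unskip k (g u)) {0..<n}"

lemma skip_values_tparts:
  assumes p: "p \<in> rtrees n" and k: "\<alpha> k = 0" and f: "f \<in> tparts n p (\<alpha> \<circ> skip k)"
  shows "skip_values n k f \<in> tparts n p \<alpha>"
proof -
  have tp: "tpartition n p f" and count: "\<And>j. card {u \<in> {0..<n}. f u = j} = \<alpha> (skip k j)"
    using f by (auto simp: tparts_def)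
  have "tpartition n p (skip_values n k f)"
    using tp rtreesD(4)[OF p] skip_facts(4,6)
    unfolding tpartition_def skip_values_def by (auto intro: le_trans)
  moreover have "card {u \<in> {0..<n}. skip_values n k f u = i} = \<alpha> i" for i
  proof (cases "i = k")
    case True
    then have "{u \<in> {0..<n}. skip_values n k f u = i} = {}"
      using skip_facts(3) by (auto simp: skip_values_def)
    then show ?thesis using True k by simp
  next
    case False
    have "{u \<in> {0..<n}. skip_values n k f u = i} = {u \<in> {0..<n}. f u = unskip k i}"
      using False skip_facts(1,2) by (auto simp: skip_values_def)
    then show ?thesis using count[of "unskip k i"] skip_facts(2)[OF False] by simp
  qed
  ultimately show ?thesis by (auto simp: tparts_def skip_values_def)
qed

lemma unskip_values_tparts:
  assumes p: "p \<in> rtrees n" and k: "0 < k" "\<alpha> k = 0" and g: "g \<in> tparts n p \<alpha>"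
  shows "unskip_values n k g \<in> tparts n p (\<alpha> \<circ> skip k)"
    "skip_values n k (unskip_values n k g) = g"
proof -
  have tp: "tpartition n p g" and count: "\<And>i. card {u \<in> {0..<n}. g u = i} = \<alpha> i"
    and ext: "g \<in> {0..<n} \<rightarrow>\<^sub>E UNIV" using g by (auto simp: tparts_def)
  have gk: "g u \<noteq> k" if "u < n" for u using content_pos[OF g that] k by auto
  have "tpartition n p (unskip_values n k g)"
    unfolding tpartition_def
  proof (intro conjI allI impI)
    fix u assume u: "u < n"
    then have "1 \<le> g u" using tp by (simp add: tpartition_def)
    then show "1 \<le> unskip_values n k g u"
      using skip_facts(7)[OF k(1), of "g u"] gk[OF u] u by (simp add: unskip_values_def)
  next
    fix u assume u: "0 < u \<and> u < n"
    then have "g u < g (p u)" using tp by (simp add: tpartition_def)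
    then show "unskip_values n k g u < unskip_values n k g (p u)"
      using skip_facts(5) gk u rtreesD(4)[OF p] by (simp add: unskip_values_def)
  qed
  moreover have "card {u \<in> {0..<n}. unskip_values n k g u = j} = (\<alpha> \<circ> skip k) j" for j
  proof -
    have "{u \<in> {0..<n}. unskip_values n k g u = j} = {u \<in> {0..<n}. g u = skip k j}"
      using gk skip_facts(1,2) by (auto simp: unskip_values_def)
    then show ?thesis using count by simp
  qed
  ultimately show "unskip_values n k g \<in> tparts n p (\<alpha> \<circ> skip k)"
    by (auto simp: tparts_def unskip_values_def)
  show "skip_values n k (unskip_values n k g) = g"
  proof
    fix u show "skip_values n k (unskip_values n k g) u = g u" using ext gk skip_facts(2)
      by (cases "u < n") (auto simp: skip_values_def unskip_values_def PiE_def extensional_def)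
  qed
qed

lemma Fcoeff_skip:
  assumes p: "p \<in> rtrees n" and k: "0 < k" "\<alpha> k = 0"
  shows "Fcoeff n p \<alpha> = Fcoeff n p (\<alpha> \<circ> skip k)"
proof -
  have "unskip_values n k (skip_values n k f) = f" if "f \<in> tparts n p (\<alpha> \<circ> skip k)" for f
    using that skip_facts(1)
    by (auto simp: fun_eq_iff tparts_def skip_values_def unskip_values_def PiE_def extensional_def)
  then have "bij_betw (skip_values n k) (tparts n p (\<alpha> \<circ> skip k)) (tparts n p \<alpha>)"
    using skip_values_tparts[of p n \<alpha> k] unskip_values_tparts[of p n k \<alpha>] p k
    by (intro bij_betw_byWitness[where f' = "unskip_values n k"]) auto
  then show ?thesis by (simp add: Fcoeff_card bij_betw_same_card)
qed

text \<open>Packed contents of size n: the compositions of n, written as exponent vectors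
  supported on {1..m}, whose last part \<alpha> m is 1 (the root's value).\<close>

definition packed :: "nat \<Rightarrow> (nat \<Rightarrow> nat) set" where
  "packed n = {\<alpha>. \<alpha> 0 = 0 \<and> (\<exists>m. \<alpha> m = 1 \<and> (\<forall>k. m < k \<longrightarrow> \<alpha> k = 0) \<and>
      (\<forall>k. 0 < k \<and> k < m \<longrightarrow> 0 < \<alpha> k) \<and> sum \<alpha> {..m} = n)}"

text \<open>Squeezing out the unused values below the top value m, one at a time, turns a
  content into a packed one without changing any coefficient.\<close>

lemma pack_content:
  "\<alpha> 0 = 0 \<Longrightarrow> \<alpha> m = 1 \<Longrightarrow> (\<forall>k. m < k \<longrightarrow> \<alpha> k = 0) \<Longrightarrow> sum \<alpha> {..m} = n \<Longrightarrow>
   \<exists>\<beta>\<in>packed n. \<forall>p\<in>rtrees n. Fcoeff n p \<alpha> = Fcoeff n p \<beta>"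
proof (induction m arbitrary: \<alpha> rule: less_induct)
  case (less m)
  show ?case
  proof (cases "\<forall>k. 0 < k \<and> k < m \<longrightarrow> 0 < \<alpha> k")
    case True
    then have "\<alpha> \<in> packed n" using less.prems by (auto simp: packed_def)
    then show ?thesis by blast
  next
    case False
    then obtain k where k: "0 < k" "k < m" "\<alpha> k = 0" by auto
    define \<alpha>' where "\<alpha>' = \<alpha> \<circ> skip k"
    have top: "\<alpha>' 0 = 0" "\<alpha>' (m - 1) = 1" "\<forall>j. m - 1 < j \<longrightarrow> \<alpha>' j = 0"
      using k less.prems by (auto simp: \<alpha>'_def skip_def)
    have image: "skip k ` {..m - 1} = {..m} - {k}"
    proof (intro set_eqI iffI)
      fix i assume "i \<in> skip k ` {..m - 1}"
      then show "i \<in> {..m} - {k}" using k by (auto simp: skip_def)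
    next
      fix i assume i: "i \<in> {..m} - {k}"
      then have "unskip k i \<in> {..m - 1}" using k by (auto simp: unskip_def)
      moreover have "skip k (unskip k i) = i" using i skip_facts(2) by auto
      ultimately show "i \<in> skip k ` {..m - 1}" by (metis imageI)
    qed
    have "inj_on (skip k) {..m - 1}" by (rule inj_onI) (metis skip_facts(1))
    then have "sum \<alpha>' {..m - 1} = sum \<alpha> (skip k ` {..m - 1})"
      by (simp add: sum.reindex \<alpha>'_def)
    also have "\<dots> = sum \<alpha> {..m}" using image k sum.remove[of "{..m}" k \<alpha>] by simp
    finally have "sum \<alpha>' {..m - 1} = n" using less.prems by simp
    then obtain \<beta> where \<beta>: "\<beta> \<in> packed n" "\<forall>p\<in>rtrees n. Fcoeff n p \<alpha>' = Fcoeff n p \<beta>"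
      using less.IH[of "m - 1" \<alpha>'] top k by auto
    have "Fcoeff n p \<alpha> = Fcoeff n p \<alpha>'" if "p \<in> rtrees n" for p
      using Fcoeff_skip[of p n k \<alpha>] that k by (simp add: \<alpha>'_def)
    then show ?thesis using \<beta> by auto
  qed
qed

lemma Fcoeff_packed:
  assumes p0: "p0 \<in> rtrees n" and nz: "Fcoeff n p0 \<alpha> \<noteq> 0"
  shows "\<exists>\<beta>\<in>packed n. \<forall>p\<in>rtrees n. Fcoeff n p \<alpha> = Fcoeff n p \<beta>"
proof -
  obtain f where f: "f \<in> tparts n p0 \<alpha>" using nz unfolding Fcoeff_card by fastforce
  have tp: "tpartition n p0 f" and count: "\<And>k. card {u \<in> {0..<n}. f u = k} = \<alpha> k"
    using f by (auto simp: tparts_def)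
  have top: "\<alpha> (f 0) = 1" "\<forall>k. f 0 < k \<longrightarrow> \<alpha> k = 0" using root_content[OF p0 f] by auto
  have "f u \<le> f 0" if "u < n" for u
    using below_root[OF p0 tp, of u] that by (cases "u = 0") auto
  then have levels: "(\<Union>k\<in>{..f 0}. {u \<in> {0..<n}. f u = k}) = {0..<n}" by auto
  have "sum \<alpha> {..f 0} = (\<Sum>k\<in>{..f 0}. card {u \<in> {0..<n}. f u = k})" using count by simp
  also have "\<dots> = card (\<Union>k\<in>{..f 0}. {u \<in> {0..<n}. f u = k})"
    by (rule card_UN_disjoint[symmetric]) auto
  also have "\<dots> = n" unfolding levels by simp
  finally show ?thesis using pack_content[OF content_zero[OF f] top] by blast
qed

text \<open>Only the
  equations indexed by E matter, since every other coefficient either vanishes for all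
  trees or coincides with one of them.\<close>

lemma classes_dependent_if_few_packed:
  assumes E: "finite E" "packed n \<subseteq> E" and few: "card E < card (tree_classes n)"
  shows "classes_dependent n"
proof -
  obtain c :: "(nat \<Rightarrow> nat) set \<Rightarrow> rat" where c: "\<exists>C\<in>tree_classes n. c C \<noteq> 0"
    and eqs: "\<And>\<beta>. \<beta> \<in> E \<Longrightarrow> (\<Sum>C\<in>tree_classes n. c C * of_nat (Fclass n C \<beta>)) = 0"
    using homogeneous_system_nontrivial[OF E(1) finite_classes few,
        of "\<lambda>\<beta> C. of_nat (Fclass n C \<beta>)"] by blast
  have "(\<Sum>C\<in>tree_classes n. c C * of_nat (Fclass n C \<alpha>)) = 0" for \<alpha>
  proof (cases "\<forall>p\<in>rtrees n. Fcoeff n p \<alpha> = 0")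
    case True
    then have "Fclass n C \<alpha> = 0" if "C \<in> tree_classes n" for C
      using class_rep[OF that] class_subset[OF that] by (auto simp: Fclass_def)
    then show ?thesis by simp
  next
    case False
    then obtain \<beta> where \<beta>: "\<beta> \<in> packed n" "\<forall>p\<in>rtrees n. Fcoeff n p \<alpha> = Fcoeff n p \<beta>"
      using Fcoeff_packed by blast
    have "Fclass n C \<alpha> = Fclass n C \<beta>" if "C \<in> tree_classes n" for C
      using \<beta>(2) class_rep[OF that] class_subset[OF that] by (auto simp: Fclass_def)
    then show ?thesis using eqs[of \<beta>] \<beta>(1) E(2) by auto
  qed
  then show ?thesis using c by (auto simp: classes_dependent_def)
qed

text \<open>Adding a new root: vertex 0 becomes the new root, the old vertices are shifted
  up by one, and the old root (now vertex 1) becomes the only child of the new root.\<close>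

definition add_root :: "nat \<Rightarrow> (nat \<Rightarrow> nat) \<Rightarrow> nat \<Rightarrow> nat" where
  "add_root n p = (\<lambda>i. if i = 0 \<or> n < i \<or> i = 1 then 0 else Suc (p (i - 1)))"

lemma add_root_rtrees:
  assumes p: "p \<in> rtrees n" shows "add_root n p \<in> rtrees (Suc n)"
proof -
  have "add_root n p i < i" if "0 < i" "i < Suc n" for i
  proof (cases "i = 1")
    case False
    then have "p (i - 1) < i - 1" using rtreesD(2)[OF p, of "i - 1"] that by auto
    then show ?thesis using that False by (auto simp: add_root_def)
  qed (auto simp: add_root_def)
  then show ?thesis by (auto simp: rtrees_def add_root_def)
qed

lemma card_fiber_Suc:
  "card {u \<in> {0..<Suc n}. g u = k} = (if g 0 = k then 1 else 0) + card {v \<in> {0..<n}. g (Suc v) = k}"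
proof -
  have split: "{u \<in> {0..<Suc n}. g u = k} =
      (if g 0 = k then {0} else {}) \<union> Suc ` {v \<in> {0..<n}. g (Suc v) = k}"
    by (auto simp: image_iff less_Suc_eq_0_disj)
  show ?thesis unfolding split by (cases "g 0 = k") (simp_all add: card_image)
qed

definition with_root :: "nat \<Rightarrow> nat \<Rightarrow> (nat \<Rightarrow> nat) \<Rightarrow> nat \<Rightarrow> nat" where
  "with_root n m f = (\<lambda>u\<in>{0..<Suc n}. if u = 0 then m else f (u - 1))"

definition drop_root :: "nat \<Rightarrow> (nat \<Rightarrow> nat) \<Rightarrow> nat \<Rightarrow> nat" where
  "drop_root n g = (\<lambda>v\<in>{0..<n}. g (Suc v))"

lemma with_root_tparts:
  assumes p: "p \<in> rtrees n" and top: "\<alpha> m = 1" "\<And>k. m < k \<Longrightarrow> \<alpha> k = 0"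
    and f: "f \<in> tparts n p (\<alpha>(m := 0))"
  shows "with_root n m f \<in> tparts (Suc n) (add_root n p) \<alpha>"
proof -
  have tp: "tpartition n p f" and count: "\<And>k. card {u \<in> {0..<n}. f u = k} = (\<alpha>(m := 0)) k"
    using f by (auto simp: tparts_def)
  have below: "f u < m" if "u < n" for u
  proof -
    have "(\<alpha>(m := 0)) (f u) \<noteq> 0" using content_pos[OF f that] .
    then show ?thesis using top(2)[of "f u"] by (cases "f u = m"; cases "m < f u") auto
  qed
  have "tpartition (Suc n) (add_root n p) (with_root n m f)"
    unfolding tpartition_def
  proof (intro conjI allI impI)
    fix u assume "u < Suc n"
    then show "1 \<le> with_root n m f u"
      using below[of 0] rtreesD(1)[OF p] tp by (auto simp: with_root_def tpartition_def)
  next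
    fix u assume u: "0 < u \<and> u < Suc n"
    show "with_root n m f u < with_root n m f (add_root n p u)"
    proof (cases "u = 1")
      case True then show ?thesis using below[of 0] rtreesD(1)[OF p] by (auto simp: with_root_def add_root_def)
    next
      case False
      then have "0 < u - 1" "u - 1 < n" using u by auto
      then have "p (u - 1) < n" "f (u - 1) < f (p (u - 1))"
        using rtreesD(4)[OF p] tp by (auto simp: tpartition_def)
      then show ?thesis using u False by (auto simp: with_root_def add_root_def)
    qed
  qed
  moreover have "card {u \<in> {0..<Suc n}. with_root n m f u = k} = \<alpha> k" for k
  proof -
    have "{v \<in> {0..<n}. with_root n m f (Suc v) = k} = {v \<in> {0..<n}. f v = k}"
      by (auto simp: with_root_def)
    moreover have "with_root n m f 0 = m" by (simp add: with_root_def)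
    ultimately have "card {u \<in> {0..<Suc n}. with_root n m f u = k} = (if m = k then 1 else 0) + (\<alpha>(m := 0)) k"
      using card_fiber_Suc[of n "with_root n m f" k] count[of k] by simp
    then show ?thesis using top(1) by (cases "k = m") simp_all
  qed
  moreover have "with_root n m f \<in> {0..<Suc n} \<rightarrow>\<^sub>E UNIV" by (simp add: with_root_def)
  ultimately show ?thesis by (simp add: tparts_def)
qed

lemma drop_root_tparts:
  assumes p: "p \<in> rtrees n" and top: "\<alpha> m = 1" "\<And>k. m < k \<Longrightarrow> \<alpha> k = 0"
    and g: "g \<in> tparts (Suc n) (add_root n p) \<alpha>"
  shows "drop_root n g \<in> tparts n p (\<alpha>(m := 0))" "with_root n m (drop_root n g) = g"
proof -
  have tp: "tpartition (Suc n) (add_root n p) g"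
    and count: "\<And>k. card {u \<in> {0..<Suc n}. g u = k} = \<alpha> k"
    and ext: "g \<in> {0..<Suc n} \<rightarrow>\<^sub>E UNIV" using g by (auto simp: tparts_def)
  have "\<alpha> (g 0) = 1" "\<And>k. g 0 < k \<Longrightarrow> \<alpha> k = 0" using root_content[OF add_root_rtrees[OF p] g] by auto
  then have root: "g 0 = m" using top by (cases "g 0 < m"; cases "m < g 0") auto
  have "tpartition n p (drop_root n g)"
    unfolding tpartition_def
  proof (intro conjI allI impI)
    fix u assume "u < n"
    then show "1 \<le> drop_root n g u" using tp by (auto simp: drop_root_def tpartition_def)
  next
    fix u assume u: "0 < u \<and> u < n"
    have "g (Suc u) < g (add_root n p (Suc u))" using tp u by (auto simp: tpartition_def)
    then show "drop_root n g u < drop_root n g (p u)"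
      using u rtreesD(4)[OF p, of u] by (auto simp: drop_root_def add_root_def)
  qed
  moreover have "card {v \<in> {0..<n}. drop_root n g v = k} = (\<alpha>(m := 0)) k" for k
  proof -
    have "{v \<in> {0..<n}. drop_root n g v = k} = {v \<in> {0..<n}. g (Suc v) = k}"
      by (auto simp: drop_root_def)
    moreover have "\<alpha> k = (if m = k then 1 else 0) + card {v \<in> {0..<n}. g (Suc v) = k}"
      using card_fiber_Suc[of n g k] count[of k] root by simp
    ultimately show ?thesis using top(1) by (cases "k = m") simp_all
  qed
  moreover have "drop_root n g \<in> {0..<n} \<rightarrow>\<^sub>E UNIV" by (simp add: drop_root_def)
  ultimately show "drop_root n g \<in> tparts n p (\<alpha>(m := 0))" by (simp add: tparts_def)
  show "with_root n m (drop_root n g) = g"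
  proof
    fix u show "with_root n m (drop_root n g) u = g u"
      using ext root by (cases u) (auto simp: with_root_def drop_root_def PiE_def extensional_def)
  qed
qed

text \<open>The coefficients of F after adding a root: the new root must carry the top value
  m, with multiplicity one, and the rest is a T-partition of the old tree.\<close>

lemma Fcoeff_add_root:
  assumes p: "p \<in> rtrees n" and top: "\<alpha> m = 1" "\<And>k. m < k \<Longrightarrow> \<alpha> k = 0"
  shows "Fcoeff (Suc n) (add_root n p) \<alpha> = Fcoeff n p (\<alpha>(m := 0))"
proof -
  have "drop_root n (with_root n m f) = f" if "f \<in> tparts n p (\<alpha>(m := 0))" for f
    using that by (auto simp: fun_eq_iff tparts_def with_root_def drop_root_def PiE_def extensional_def)
  then have "bij_betw (with_root n m) (tparts n p (\<alpha>(m := 0))) (tparts (Suc n) (add_root n p) \<alpha>)"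
    using with_root_tparts[of p n \<alpha> m] drop_root_tparts[of p n \<alpha> m] p top
    by (intro bij_betw_byWitness[where f' = "drop_root n"]) auto
  then show ?thesis by (simp add: Fcoeff_card bij_betw_same_card)
qed

lemma Fcoeff_no_top:
  assumes p: "p \<in> rtrees n" and no_top: "\<not> (\<exists>m. \<alpha> m = 1 \<and> (\<forall>k. m < k \<longrightarrow> \<alpha> k = 0))"
  shows "Fcoeff n p \<alpha> = 0"
proof -
  have "tparts n p \<alpha> = {}" using root_content[OF p] no_top by blast
  then show ?thesis by (simp add: Fcoeff_card)
qed

text \<open>Adding a root reflects isomorphism: an isomorphism of the enlarged trees fixes
  the unique child of the root and restricts to an isomorphism of the old trees.\<close>

lemma add_root_reflects_iso:
  assumes p: "p \<in> rtrees n" and q: "q \<in> rtrees n"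
    and iso: "tree_iso (Suc n) (add_root n p) (add_root n q)"
  shows "tree_iso n p q"
proof -
  obtain \<sigma> where s: "iso_wit (Suc n) (add_root n p) (add_root n q) \<sigma>" using iso tree_iso_wit by blast
  have b: "bij_betw \<sigma> {0..<Suc n} {0..<Suc n}" and s0: "\<sigma> 0 = 0"
    and comm: "\<And>i. 0 < i \<Longrightarrow> i < Suc n \<Longrightarrow> add_root n q (\<sigma> i) = \<sigma> (add_root n p i)"
    using iso_witD[OF s] by auto
  have inj: "inj_on \<sigma> {0..<Suc n}" using b by (simp add: bij_betw_def)
  have n1: "1 \<le> n" using rtreesD(1)[OF p] .
  have nonroot: "0 < \<sigma> i" "\<sigma> i < Suc n" if "0 < i" "i < Suc n" for i
    using iso_wit_nonroot[OF s that] by auto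
  have s1: "\<sigma> 1 = 1"
  proof -
    have "add_root n q (\<sigma> 1) = 0" using comm[of 1] n1 s0 by (simp add: add_root_def)
    then show ?thesis using nonroot[of 1] n1 unfolding add_root_def
      by (cases "\<sigma> 1 = 0 \<or> n < \<sigma> 1 \<or> \<sigma> 1 = 1") auto
  qed
  define \<tau> where "\<tau> = (\<lambda>j. \<sigma> (Suc j) - 1)"
  have not1: "\<sigma> (Suc j) \<noteq> 1" if "0 < j" "j < n" for j
    using inj_onD[OF inj, of "Suc j" 1] s1 that by auto
  have "inj_on \<tau> {0..<n}"
  proof (rule inj_onI)
    fix i j assume ij: "i \<in> {0..<n}" "j \<in> {0..<n}" "\<tau> i = \<tau> j"
    then have "\<sigma> (Suc i) = \<sigma> (Suc j)" using nonroot[of "Suc i"] nonroot[of "Suc j"] by (simp add: \<tau>_def)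
    then show "i = j" using inj ij by (auto dest: inj_onD)
  qed
  moreover have "\<tau> j < n" if "j < n" for j using nonroot[of "Suc j"] that by (simp add: \<tau>_def)
  then have "\<tau> ` {0..<n} \<subseteq> {0..<n}" by auto
  ultimately have "bij_betw \<tau> {0..<n} {0..<n}"
    using endo_inj_surj[of "{0..<n}" \<tau>] by (simp add: bij_betw_def)
  moreover have "\<tau> 0 = 0" using s1 by (simp add: \<tau>_def)
  moreover have "q (\<tau> j) = \<tau> (p j)" if j: "0 < j" "j < n" for j
  proof -
    have "2 \<le> \<sigma> (Suc j)" "\<sigma> (Suc j) \<le> n" using nonroot[of "Suc j"] not1[OF j] j by auto
    then have "add_root n q (\<sigma> (Suc j)) = Suc (q (\<tau> j))" by (simp add: add_root_def \<tau>_def)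
    moreover have "add_root n p (Suc j) = Suc (p j)" using j by (simp add: add_root_def)
    ultimately show ?thesis using comm[of "Suc j"] j by (simp add: \<tau>_def)
  qed
  ultimately show ?thesis by (auto simp: tree_iso_wit iso_wit_def)
qed

definition root_lift :: "nat \<Rightarrow> (nat \<Rightarrow> nat) set \<Rightarrow> (nat \<Rightarrow> nat) set" where
  "root_lift n C = iso_rel (Suc n) `` {add_root n (SOME p. p \<in> C)}"

lemma root_lift_class:
  assumes C: "C \<in> tree_classes n"
  shows "root_lift n C \<in> tree_classes (Suc n)" "add_root n (SOME p. p \<in> C) \<in> root_lift n C"
  using class_of_tree[OF add_root_rtrees] class_rep[OF C] class_subset[OF C]
  by (auto simp: root_lift_def)

lemma inj_root_lift: "inj_on (root_lift n) (tree_classes n)"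
proof (rule inj_onI)
  fix C1 C2 assume C: "C1 \<in> tree_classes n" "C2 \<in> tree_classes n" and eq: "root_lift n C1 = root_lift n C2"
  let ?p1 = "SOME p. p \<in> C1" and ?p2 = "SOME p. p \<in> C2"
  have p: "?p1 \<in> C1" "?p2 \<in> C2" "?p1 \<in> rtrees n" "?p2 \<in> rtrees n"
    using class_rep class_subset C by blast+
  have "(add_root n ?p1, add_root n ?p2) \<in> iso_rel (Suc n)"
    using in_quotient_imp_in_rel[OF iso_equiv root_lift_class(1)[OF C(1), unfolded tree_classes_def]]
      root_lift_class(2)[OF C(1)] root_lift_class(2)[OF C(2)] eq by simp
  then have "(?p1, ?p2) \<in> iso_rel n"
    using add_root_reflects_iso p by (simp add: iso_rel_def)
  then show "C1 = C2" using quotient_eqI[OF iso_equiv] C p by (auto simp: tree_classes_def)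
qed

lemma Fclass_root_lift:
  assumes C: "C \<in> tree_classes n" and top: "\<alpha> m = 1" "\<And>k. m < k \<Longrightarrow> \<alpha> k = 0"
  shows "Fclass (Suc n) (root_lift n C) \<alpha> = Fclass n C (\<alpha>(m := 0))"
  using Fclass_eq[OF root_lift_class[OF C]] Fcoeff_add_root[of "SOME p. p \<in> C" n \<alpha> m]
    class_rep[OF C] class_subset[OF C] top
  by (auto simp: Fclass_def)

lemma Fclass_root_lift_no_top:
  assumes C: "C \<in> tree_classes n" and no_top: "\<not> (\<exists>m. \<alpha> m = 1 \<and> (\<forall>k. m < k \<longrightarrow> \<alpha> k = 0))"
  shows "Fclass (Suc n) (root_lift n C) \<alpha> = 0"
  using Fclass_eq[OF root_lift_class[OF C]] Fcoeff_no_top[OF add_root_rtrees no_top]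
    class_rep[OF C] class_subset[OF C]
  by auto

text \<open>Induction step: a relation among the classes on n vertices is transported along
  the injective map root_lift; the other classes on n + 1 vertices get coefficient 0.\<close>

lemma classes_dependent_Suc:
  assumes "classes_dependent n"
  shows "classes_dependent (Suc n)"
proof -
  obtain c :: "(nat \<Rightarrow> nat) set \<Rightarrow> rat" where c: "\<exists>C\<in>tree_classes n. c C \<noteq> 0"
    and rel: "\<And>\<alpha>. (\<Sum>C\<in>tree_classes n. c C * of_nat (Fclass n C \<alpha>)) = 0"
    using assms by (auto simp: classes_dependent_def)
  let ?L = "root_lift n"
  define c' where "c' = (\<lambda>D. if D \<in> ?L ` tree_classes n then c (inv_into (tree_classes n) ?L D) else 0)"
  have c'_lift: "c' (?L C) = c C" if "C \<in> tree_classes n" for C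
    using that inj_root_lift by (simp add: c'_def inv_into_f_f)
  have "(\<Sum>D\<in>tree_classes (Suc n). c' D * of_nat (Fclass (Suc n) D \<alpha>)) = 0" for \<alpha>
  proof -
    have "(\<Sum>D\<in>tree_classes (Suc n). c' D * of_nat (Fclass (Suc n) D \<alpha>))
        = (\<Sum>D\<in>?L ` tree_classes n. c' D * of_nat (Fclass (Suc n) D \<alpha>))"
      by (rule sum.mono_neutral_right) (auto simp: finite_classes root_lift_class c'_def)
    also have "\<dots> = (\<Sum>C\<in>tree_classes n. c C * of_nat (Fclass (Suc n) (?L C) \<alpha>))"
      by (simp add: sum.reindex[OF inj_root_lift] c'_lift)
    also have "\<dots> = 0"
    proof (cases "\<exists>m. \<alpha> m = 1 \<and> (\<forall>k. m < k \<longrightarrow> \<alpha> k = 0)")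
      case True
      then obtain m where "\<alpha> m = 1" "\<And>k. m < k \<Longrightarrow> \<alpha> k = 0" by blast
      then show ?thesis using Fclass_root_lift[of _ n \<alpha> m] rel[of "\<alpha>(m := 0)"] by simp
    qed (simp add: Fclass_root_lift_no_top)
    finally show ?thesis .
  qed
  moreover have "\<exists>D\<in>tree_classes (Suc n). c' D \<noteq> 0" using c root_lift_class(1) c'_lift by metis
  ultimately show ?thesis by (auto simp: classes_dependent_def)
qed

definition list_fun :: "nat list \<Rightarrow> nat \<Rightarrow> nat" where
  "list_fun l = (\<lambda>i. if i < length l then l ! i else 0)"

lemma list_fun_map: "(\<forall>k. m < k \<longrightarrow> \<alpha> k = 0) \<Longrightarrow> \<alpha> = list_fun (map \<alpha> [0..<Suc m])"
  by (auto simp: list_fun_def fun_eq_iff not_less simp del: upt_Suc)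

text \<open>The eight packed contents of size 5: (0, c, 1) for the compositions c of 4.\<close>

definition packed5_list :: "nat list list" where
  "packed5_list = [[0,4,1],[0,1,3,1],[0,2,2,1],[0,3,1,1],[0,1,1,2,1],[0,1,2,1,1],[0,2,1,1,1],
                   [0,1,1,1,1,1]]"

lemma packed_5: "packed 5 \<subseteq> list_fun ` set packed5_list"
proof
  fix \<alpha> assume "\<alpha> \<in> packed 5"
  then obtain m where a0: "\<alpha> 0 = 0" and am: "\<alpha> m = 1" and above: "\<forall>k. m < k \<longrightarrow> \<alpha> k = 0"
    and pos: "\<forall>k. 0 < k \<and> k < m \<longrightarrow> 0 < \<alpha> k" and total: "sum \<alpha> {..m} = 5"
    by (auto simp: packed_def)
  have "m \<le> 5"
  proof -
    have "0 < \<alpha> k" if "0 < k" "k \<le> m" for k using pos am that by (cases "k = m") auto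
    then have "sum (\<lambda>_. 1::nat) {1..m} \<le> sum \<alpha> {1..m}" by (intro sum_mono) (auto simp: Suc_le_eq)
    also have "\<dots> \<le> sum \<alpha> {..m}" by (rule sum_mono2) auto
    finally show ?thesis using total by simp
  qed
  moreover have "m \<noteq> 0" using a0 am by (metis zero_neq_one)
  ultimately have "m \<in> {1, 2, 3, 4, 5}" by auto
  then have "map \<alpha> [0..<Suc m] \<in> set packed5_list"
  proof (elim insertE emptyE)
    assume m: "m = 2"
    then have "\<alpha> 1 = 4" using total a0 am by (simp add: numeral_eq_Suc)
    then show ?thesis using m a0 am by (simp add: numeral_eq_Suc packed5_list_def)
  next
    assume m: "m = 3"
    then have "\<alpha> 1 + \<alpha> 2 = 4" "0 < \<alpha> 1" "0 < \<alpha> 2" using total a0 am pos by (simp_all add: numeral_eq_Suc)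
    then have "(\<alpha> 1, \<alpha> 2) \<in> {(1, 3), (2, 2), (3, 1)}" by auto
    then show ?thesis using m a0 am by (auto simp: numeral_eq_Suc packed5_list_def)
  next
    assume m: "m = 4"
    then have "\<alpha> 1 + \<alpha> 2 + \<alpha> 3 = 4" "0 < \<alpha> 1" "0 < \<alpha> 2" "0 < \<alpha> 3"
      using total a0 am pos by (simp_all add: numeral_eq_Suc)
    then have "(\<alpha> 1, \<alpha> 2, \<alpha> 3) \<in> {(1, 1, 2), (1, 2, 1), (2, 1, 1)}" by auto
    then show ?thesis using m a0 am by (auto simp: numeral_eq_Suc packed5_list_def)
  next
    assume m: "m = 5"
    then have "\<alpha> 1 + \<alpha> 2 + \<alpha> 3 + \<alpha> 4 = 4" "0 < \<alpha> 1" "0 < \<alpha> 2" "0 < \<alpha> 3" "0 < \<alpha> 4"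
      using total a0 am pos by (simp_all add: numeral_eq_Suc)
    then have "\<alpha> 1 = 1 \<and> \<alpha> 2 = 1 \<and> \<alpha> 3 = 1 \<and> \<alpha> 4 = 1" by auto
    then show ?thesis using m a0 am by (simp add: numeral_eq_Suc packed5_list_def)
  qed (use total a0 am in simp)
  then show "\<alpha> \<in> list_fun ` set packed5_list" using list_fun_map[OF above] by (metis image_eqI)
qed

text \<open>Isomorphism invariants used to tell the trees on five vertices apart: the number
  of vertices at each depth, and the number of leaves, counted along lists so that
  they can be evaluated.  depth p k i is the depth of i computed with at most k steps
  towards the root.\<close>

primrec depth :: "(nat \<Rightarrow> nat) \<Rightarrow> nat \<Rightarrow> nat \<Rightarrow> nat" where
  "depth p 0 i = 0"
| "depth p (Suc k) i = (if i = 0 then 0 else Suc (depth p k (p i)))"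

definition shape :: "nat \<Rightarrow> (nat \<Rightarrow> nat) \<Rightarrow> nat list \<times> nat" where
  "shape n p = (map (\<lambda>d. length (filter (\<lambda>i. depth p n i = d) [0..<n])) [0..<n],
                length (filter (\<lambda>i. \<forall>j\<in>set [1..<n]. p j \<noteq> i) [0..<n]))"

lemma card_set_filter: "card {i \<in> {0..<n}. P i} = length (filter P [0..<n])"
  by (simp add: distinct_length_filter Int_def conj_commute)

lemma depth_iso:
  assumes p: "p \<in> rtrees n" and s: "iso_wit n p q \<sigma>"
  shows "i < n \<Longrightarrow> depth q k (\<sigma> i) = depth p k i"
proof (induction k arbitrary: i)
  case (Suc k)
  show ?case
  proof (cases "i = 0")
    case False
    then have "0 < \<sigma> i" "p i < n" using iso_wit_nonroot[OF s, of i] rtreesD(4)[OF p] Suc.prems by auto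
    then show ?thesis using False iso_witD(3)[OF s, of i] Suc.prems Suc.IH[of "p i"] by simp
  qed (simp add: iso_witD(2)[OF s])
qed simp

lemma leaf_iso:
  assumes p: "p \<in> rtrees n" and s: "iso_wit n p q \<sigma>" and i: "i < n"
  shows "(\<forall>j\<in>{1..<n}. p j \<noteq> i) \<longleftrightarrow> (\<forall>j\<in>{1..<n}. q j \<noteq> \<sigma> i)"
proof -
  have b: "bij_betw \<sigma> {0..<n} {0..<n}" and s0: "\<sigma> 0 = 0"
    and comm: "\<And>i. 0 < i \<Longrightarrow> i < n \<Longrightarrow> q (\<sigma> i) = \<sigma> (p i)" using iso_witD[OF s] by auto
  have inj: "inj_on \<sigma> {0..<n}" and onto: "\<sigma> ` {0..<n} = {0..<n}" using b by (auto simp: bij_betw_def)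
  have "(\<exists>j\<in>{1..<n}. p j = i) \<longleftrightarrow> (\<exists>j\<in>{1..<n}. q j = \<sigma> i)"
  proof
    assume "\<exists>j\<in>{1..<n}. p j = i"
    then obtain j where j: "j \<in> {1..<n}" "p j = i" by blast
    then have "\<sigma> j \<in> {1..<n}" using iso_wit_nonroot[OF s, of j] by simp
    moreover have "q (\<sigma> j) = \<sigma> i" using comm[of j] j by simp
    ultimately show "\<exists>j\<in>{1..<n}. q j = \<sigma> i" by blast
  next
    assume "\<exists>j\<in>{1..<n}. q j = \<sigma> i"
    then obtain j where j: "j \<in> {1..<n}" "q j = \<sigma> i" by blast
    then have "j \<in> \<sigma> ` {0..<n}" using onto by simp
    then obtain j' where j': "j' \<in> {0..<n}" "j = \<sigma> j'" by blast
    then have "j' \<noteq> 0" using j(1) s0 by (metis atLeastLessThan_iff not_one_le_zero)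
    then have "\<sigma> (p j') = \<sigma> i" using comm[of j'] j j' by simp
    moreover have "p j' \<in> {0..<n}" using rtreesD(4)[OF p, of j'] j'(1) by simp
    ultimately have "p j' = i" using inj_onD[OF inj] i by simp
    then show "\<exists>j\<in>{1..<n}. p j = i" using \<open>j' \<noteq> 0\<close> j'(1) by auto
  qed
  then show ?thesis by blast
qed

lemma shape_iso:
  assumes p: "p \<in> rtrees n" and iso: "tree_iso n p q"
  shows "shape n p = shape n q"
proof -
  obtain \<sigma> where s: "iso_wit n p q \<sigma>" using iso tree_iso_wit by blast
  have b: "bij_betw \<sigma> {0..<n} {0..<n}" using iso_witD[OF s] by simp
  have "card {i \<in> {0..<n}. depth p n i = d} = card {i \<in> {0..<n}. depth q n i = d}" for d
    by (rule card_filter_bij[OF b]) (simp add: depth_iso[OF p s])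
  moreover have "card {i \<in> {0..<n}. \<forall>j\<in>{1..<n}. p j \<noteq> i} = card {i \<in> {0..<n}. \<forall>j\<in>{1..<n}. q j \<noteq> i}"
  proof (rule card_filter_bij[OF b])
    fix i assume "i \<in> {0..<n}"
    then show "(\<forall>j\<in>{1..<n}. p j \<noteq> i) \<longleftrightarrow> (\<forall>j\<in>{1..<n}. q j \<noteq> \<sigma> i)"
      by (intro leaf_iso[OF p s]) simp
  qed
  ultimately show ?thesis unfolding shape_def card_set_filter[symmetric] set_upt by simp
qed

text \<open>Nine trees on five vertices (as parent lists in breadth-first order), pairwise
  non-isomorphic since their shapes differ.\<close>

definition trees5 :: "nat list list" where
  "trees5 = [[0,0,0,0,0],[0,0,0,0,1],[0,0,0,1,1],[0,0,0,1,2],[0,0,0,1,3],[0,0,1,1,1],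
             [0,0,1,1,2],[0,0,1,2,2],[0,0,1,2,3]]"

lemma trees5_rtrees: "l \<in> set trees5 \<Longrightarrow> list_fun l \<in> rtrees 5"
  unfolding trees5_def by (auto simp: rtrees_def list_fun_def less_Suc_eq numeral_eq_Suc)

lemma trees5_shapes: "distinct (map (shape 5 \<circ> list_fun) trees5)"
  by (simp add: trees5_def shape_def list_fun_def upt_rec eval_nat_numeral)

lemma card_tree_classes_5: "9 \<le> card (tree_classes 5)"
proof -
  define cls where "cls = (\<lambda>l. iso_rel 5 `` {list_fun l})"
  have inj_shape: "inj_on (shape 5 \<circ> list_fun) (set trees5)" using trees5_shapes by (simp add: distinct_map)
  have "inj_on cls (set trees5)"
  proof (rule inj_onI)
    fix l1 l2 assume l: "l1 \<in> set trees5" "l2 \<in> set trees5" and eq: "cls l1 = cls l2"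
    have "list_fun l2 \<in> cls l1" using class_of_tree(2)[OF trees5_rtrees[OF l(2)]] eq by (simp only: cls_def)
    then have "(list_fun l1, list_fun l2) \<in> iso_rel 5" by (simp add: cls_def)
    then have "shape 5 (list_fun l1) = shape 5 (list_fun l2)" using shape_iso by (auto simp: iso_rel_def)
    then show "l1 = l2" using inj_onD[OF inj_shape _ l] by simp
  qed
  then have "card (cls ` set trees5) = 9"
    using distinct_card[of trees5] trees5_shapes by (simp add: card_image distinct_map, simp add: trees5_def)
  moreover have "cls ` set trees5 \<subseteq> tree_classes 5"
    using class_of_tree(1)[OF trees5_rtrees] by (auto simp: cls_def)
  ultimately show ?thesis using card_mono[OF finite_classes] by metis
qed

lemma classes_dependent_5: "classes_dependent 5"
proof (rule classes_dependent_if_few_packed[OF _ packed_5])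
  have "card (list_fun ` set packed5_list) \<le> 8"
    using card_image_le[of "set packed5_list" list_fun] card_length[of packed5_list]
    by (simp add: packed5_list_def)
  then show "card (list_fun ` set packed5_list) < card (tree_classes 5)" using card_tree_classes_5 by simp
qed simp

theorem mainTheorem7:
  fixes n :: nat
  assumes "n \<ge> 5"
  shows "\<exists>c :: (nat \<Rightarrow> nat) set \<Rightarrow> rat.
           (\<exists>C \<in> tree_classes n. c C \<noteq> 0) \<and>
           (\<forall>\<alpha> :: nat \<Rightarrow> nat. (\<Sum>C \<in> tree_classes n. c C * of_nat (Fclass n C \<alpha>)) = 0)"
proof -
  have "classes_dependent n"
    using assms by (induction n rule: dec_induct) (auto intro: classes_dependent_5 classes_dependent_Suc)
  then show ?thesis by (simp add: classes_dependent_def)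
qed

end
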